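(* Let $\mathcal{H}_1,\mathcal{H}_2$ be finite-dimensional Hilbert spaces of dimensions $d_1,d_2$, and let $f:\mathcal{L}(\mathcal{H}_1)\to\mathcal{L}(\mathcal{H}_2)$ be a linear, unitarity-preserving map with $f(\mathbb{1}_1)=\mathbb{1}_2$. Then $d_2/d_1$ is an integer, and whenever $|\psi\rangle\langle\psi|,|\phi\rangle\langle\phi|\in\mathcal{L}(\mathcal{H}_1)$ are two orthogonal projectors onto pure states, $f(|\psi\rangle\langle\psi|)$ and $f(|\phi\rangle\langle\phi|)$ are two orthogonal projectors of rank $d_2/d_1$.
   Context: A map $f:\mathcal{L}(\mathcal{H}_1)\to\mathcal{L}(\mathcal{H}_2)$ is unitarity preserving if $f(U)$ is unitary for every unitary $U\in\mathcal{L}(\mathcal{H}_1)$. $\mathbb{1}_k$ is the identity on $\mathcal{H}_k$. *)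

theory Defs
  imports "Jordan_Normal_Form.Schur_Decomposition" "Jordan_Normal_Form.DL_Rank"
begin

text \<open>Operators on a d-dimensional Hilbert space are complex d x d matrices.\<close>

definition unitary_mat :: "nat \<Rightarrow> complex mat \<Rightarrow> bool" where
  "unitary_mat n U \<longleftrightarrow> U \<in> carrier_mat n n \<and> U * mat_adjoint U = 1\<^sub>m n \<and> mat_adjoint U * U = 1\<^sub>m n"

definition linear_map_mat :: "nat \<Rightarrow> nat \<Rightarrow> (complex mat \<Rightarrow> complex mat) \<Rightarrow> bool" where
  "linear_map_mat d1 d2 f \<longleftrightarrow>
     (\<forall>A \<in> carrier_mat d1 d1. f A \<in> carrier_mat d2 d2) \<and>
     (\<forall>A \<in> carrier_mat d1 d1. \<forall>B \<in> carrier_mat d1 d1. f (A + B) = f A + f B) \<and>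
     (\<forall>c. \<forall>A \<in> carrier_mat d1 d1. f (c \<cdot>\<^sub>m A) = c \<cdot>\<^sub>m f A)"

definition unitarity_preserving :: "nat \<Rightarrow> nat \<Rightarrow> (complex mat \<Rightarrow> complex mat) \<Rightarrow> bool" where
  "unitarity_preserving d1 d2 f \<longleftrightarrow> (\<forall>U. unitary_mat d1 U \<longrightarrow> unitary_mat d2 (f U))"

definition ket_bra :: "complex vec \<Rightarrow> complex mat" where
  "ket_bra v = mat (dim_vec v) (dim_vec v) (\<lambda>(i, j). v $ i * cnj (v $ j))"

definition orth_projector :: "nat \<Rightarrow> complex mat \<Rightarrow> bool" where
  "orth_projector n P \<longleftrightarrow> P \<in> carrier_mat n n \<and> mat_adjoint P = P \<and> P * P = P"

end

theory Submission
  imports Defs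
begin

text \<open>For an orthogonal projector \<open>P\<close>, \<open>1 + c P\<close> is unitary whenever \<open>\<bar>1 + c\<bar> = 1\<close>;
  applying \<open>f\<close> with \<open>c = -2\<close> and \<open>c = \<i> - 1\<close> shows that \<open>f\<close> maps orthogonal projectors to
  orthogonal projectors. For orthonormal \<open>u\<close>, \<open>v\<close> the images \<open>A\<close>, \<open>B\<close> of \<open>|u\<rangle>\<langle>u|\<close>, \<open>|v\<rangle>\<langle>v|\<close> are
  projectors whose sum is a projector, hence \<open>A B = B A = 0\<close>. The images of the projectors onto
  \<open>u + t v\<close>, \<open>t\<close> real, force \<open>S = f (|u\<rangle>\<langle>v| + |v\<rangle>\<langle>u|)\<close> to satisfy \<open>S\<^sup>2 = A + B\<close> and
  \<open>A S + S A = S\<close>, and then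
  \<open>2 tr A = tr (A S\<^sup>2 + S A S) = tr (S\<^sup>2) = tr A + tr B\<close>. Extending a unit vector \<open>u\<close>
  to an orthonormal basis, the images of the basis projectors sum to \<open>1\<close>, so
  \<open>d\<^sub>2 = d\<^sub>1 tr f (|u\<rangle>\<langle>u|) = d\<^sub>1 rank f (|u\<rangle>\<langle>u|)\<close>, the rank of an idempotent being its trace.\<close>

section \<open>Adjoints and traces of matrices\<close>

lemma mat_adjoint_carrier [simp]:
  "A \<in> carrier_mat nr nc \<Longrightarrow> mat_adjoint A \<in> carrier_mat nc nr"
  unfolding mat_adjoint_def by (auto simp: mat_of_rows_def)

lemma dim_mat_adjoint [simp]:
  "dim_row (mat_adjoint A) = dim_col A" "dim_col (mat_adjoint A) = dim_row A"
  unfolding mat_adjoint_def by (auto simp: mat_of_rows_def)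

lemma index_mat_adjoint [simp]:
  "i < dim_col A \<Longrightarrow> j < dim_row A \<Longrightarrow> mat_adjoint A $$ (i, j) = cnj (A $$ (j, i))"
  unfolding mat_adjoint_def by (auto simp: mat_of_rows_def conjugate_complex_def)

lemma mat_adjoint_one_plus_smult:
  "Q \<in> carrier_mat n n \<Longrightarrow> mat_adjoint (1\<^sub>m n + c \<cdot>\<^sub>m Q) = 1\<^sub>m n + cnj c \<cdot>\<^sub>m mat_adjoint Q"
  by (intro eq_matI) auto

text \<open>Meant for \<open>simp\<close> with \<open>index_mult_mat(1)\<close> deleted, so that entries of products are
  not unfolded into scalar products.\<close>

context
  fixes X Y Z :: "'a :: comm_ring_1 mat" and n i j :: nat
  assumes X: "X \<in> carrier_mat n n" and Y: "Y \<in> carrier_mat n n" and Z: "Z \<in> carrier_mat n n"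
    and ij: "i < n" "j < n"
begin

lemma index_mult_add_left: "((X + Y) * Z) $$ (i, j) = (X * Z) $$ (i, j) + (Y * Z) $$ (i, j)"
  using X Y Z ij by (simp add: add_mult_distrib_mat del: index_mult_mat(1))

lemma index_mult_add_right: "(Z * (X + Y)) $$ (i, j) = (Z * X) $$ (i, j) + (Z * Y) $$ (i, j)"
  using X Y Z ij by (simp add: mult_add_distrib_mat del: index_mult_mat(1))

lemma index_mult_smult_left: "((c \<cdot>\<^sub>m X) * Z) $$ (i, j) = c * (X * Z) $$ (i, j)"
  using X Z ij by (simp add: mult_smult_assoc_mat[OF X Z] del: index_mult_mat(1))

lemma index_mult_smult_right: "(Z * (c \<cdot>\<^sub>m X)) $$ (i, j) = c * (Z * X) $$ (i, j)"
  using X Z ij by (simp add: mult_smult_distrib[OF Z X] del: index_mult_mat(1))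

lemma index_mult_one_left: "(1\<^sub>m n * Z) $$ (i, j) = Z $$ (i, j)"
  using Z ij by simp

lemma index_mult_one_right: "(Z * 1\<^sub>m n) $$ (i, j) = Z $$ (i, j)"
  using Z ij by simp

end

lemmas index_mult_expand = index_mult_add_left index_mult_add_right
  index_mult_smult_left index_mult_smult_right index_mult_one_left index_mult_one_right

definition trace :: "'a :: comm_ring_1 mat \<Rightarrow> 'a" where
  "trace A = (\<Sum>i<dim_row A. A $$ (i, i))"

lemma trace_add: "A \<in> carrier_mat n n \<Longrightarrow> B \<in> carrier_mat n n \<Longrightarrow> trace (A + B) = trace A + trace B"
  unfolding trace_def by (simp add: sum.distrib)

lemma trace_one [simp]: "trace (1\<^sub>m n :: 'a :: comm_ring_1 mat) = of_nat n"
  unfolding trace_def by simp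

lemma trace_zero [simp]: "trace (0\<^sub>m n n :: 'a :: comm_ring_1 mat) = 0"
  unfolding trace_def by simp

lemma trace_mult_comm:
  assumes A: "A \<in> carrier_mat n m" and B: "B \<in> carrier_mat m n"
  shows "trace (A * B) = trace (B * A)"
proof -
  have "trace (A * B) = (\<Sum>i<n. \<Sum>k<m. A $$ (i, k) * B $$ (k, i))"
    unfolding trace_def using A B by (simp add: scalar_prod_def atLeast0LessThan)
  also have "\<dots> = (\<Sum>k<m. \<Sum>i<n. B $$ (k, i) * A $$ (i, k))"
    by (subst sum.swap) (simp add: mult.commute)
  also have "\<dots> = trace (B * A)"
    unfolding trace_def using A B by (simp add: scalar_prod_def atLeast0LessThan)
  finally show ?thesis .
qed

lemma trace_eq_if_exchanged:
  fixes A B S :: "'a :: comm_ring_1 mat"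
  assumes A: "A \<in> carrier_mat n n" and B: "B \<in> carrier_mat n n" and S: "S \<in> carrier_mat n n"
    and AA: "A * A = A" and AB: "A * B = 0\<^sub>m n n" and BA: "B * A = 0\<^sub>m n n"
    and SS: "S * S = A + B" and AS: "A * S + S * A = S"
  shows "trace A = trace B"
proof -
  have "(A * S) * S + (S * A) * S = (A * S + S * A) * S"
    using A S by (intro add_mult_distrib_mat[symmetric]) auto
  also have "\<dots> = A + B" using AS SS by simp
  finally have "trace ((A * S) * S) + trace ((S * A) * S) = trace A + trace B"
    using A B S by (metis mult_carrier_mat trace_add)
  moreover have "(A * S) * S = A"
    using A B S by (simp add: assoc_mult_mat[of A n n S n S n] SS mult_add_distrib_mat AA AB)
  moreover have "trace ((S * A) * S) = trace A"
  proof -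
    have "trace ((S * A) * S) = trace (S * (S * A))"
      using A S by (intro trace_mult_comm) auto
    also have "S * (S * A) = A"
      using A B S by (simp add: assoc_mult_mat[of S n n S n A n, symmetric] SS add_mult_distrib_mat AA BA)
    finally show ?thesis .
  qed
  ultimately show ?thesis by simp
qed

section \<open>Rank of an idempotent matrix\<close>

lemma (in vec_space) column_basis_factorization:
  assumes P: "P \<in> carrier_mat n m"
  obtains X Y where "X \<in> carrier_mat n (rank P)" "Y \<in> carrier_mat (rank P) m" "X * Y = P"
    and "distinct (cols X)" "lin_indpt (set (cols X))" "set (cols X) \<subseteq> set (cols P)"
proof -
  let ?C = "set (cols P)"
  have C: "?C \<subseteq> carrier_vec n" using P cols_dim by blast
  obtain S where S: "maximal S (\<lambda>T. T \<subseteq> ?C \<and> lin_indpt T)"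
    using maximal_exists[of "\<lambda>T. T \<subseteq> ?C \<and> lin_indpt T" "card ?C" "{}"]
    by (meson List.finite_set card_mono empty_iff empty_subsetI finite_lin_indpt2 rev_finite_subset)
  have SC: "S \<subseteq> ?C" and S_indpt: "lin_indpt S" using S unfolding maximal_def by auto
  have S_carrier: "S \<subseteq> carrier_vec n" using SC C by auto
  have C_span: "?C \<subseteq> span S"
  proof
    fix s assume s: "s \<in> ?C"
    show "s \<in> span S"
    proof (rule ccontr)
      assume s_span: "s \<notin> span S"
      then have "s \<notin> S" using S_carrier span_mem by auto
      moreover have "lin_indpt (insert s S)"
        using lin_dep_iff_in_span[OF S_carrier S_indpt, of s] s_span \<open>s \<notin> S\<close> s C
        by (metis Un_insert_right subsetD sup_bot.right_neutral)
      ultimately show False using S SC s unfolding maximal_def by blast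
    qed
  qed
  obtain bs where bs: "set bs = S" "distinct bs"
    using finite_distinct_list finite_subset[OF SC] by blast
  have len: "length bs = rank P"
    using rank_card_indpt[OF P S] bs distinct_card by metis
  define X where "X = mat_of_cols n bs"
  have X: "X \<in> carrier_mat n (rank P)" unfolding X_def len[symmetric] by simp
  have cols_X: "cols X = bs" unfolding X_def using bs S_carrier by simp
  have "\<exists>y \<in> carrier_vec (rank P). X *\<^sub>v y = col P j" if j: "j < m" for j
  proof -
    have "col P j \<in> span S" using C_span j P by (auto simp: cols_def)
    then have "col P j \<in> col_space X" unfolding col_space_def cols_X bs(1) .
    then show ?thesis unfolding col_space_eq[OF X] using X by auto
  qed
  then obtain y where y: "\<And>j. j < m \<Longrightarrow> y j \<in> carrier_vec (rank P) \<and> X *\<^sub>v y j = col P j"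
    by metis
  define Y where "Y = mat_of_cols (rank P) (map y [0..<m])"
  have Y: "Y \<in> carrier_mat (rank P) m"
    unfolding Y_def using mat_of_cols_carrier(1)[of "rank P" "map y [0..<m]"] by simp
  have "X * Y = P"
    by (rule mat_col_eqI) (use X Y P y in \<open>auto simp: Y_def col_mult2[OF X Y] simp del: col_mult\<close>)
  with X Y show ?thesis using that cols_X bs S_indpt SC by auto
qed

lemma (in vec_space) mult_left_cancel_lin_indpt_cols:
  assumes X: "X \<in> carrier_mat n r" and dist: "distinct (cols X)" and indpt: "lin_indpt (set (cols X))"
    and A: "A \<in> carrier_mat r m" and B: "B \<in> carrier_mat r m" and XAB: "X * A = X * B"
  shows "A = B"
proof (rule mat_col_eqI)
  fix j assume "j < dim_col B"
  then have j: "j < m" using B by simp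
  have "X *\<^sub>v (col A j - col B j) = col (X * A) j - col (X * B) j"
    using X A B j by (simp add: mult_minus_distrib_mat_vec col_mult2[OF X] del: col_mult)
  then have X0: "X *\<^sub>v (col A j - col B j) = 0\<^sub>v n"
    using XAB X B j by (simp del: col_mult)
  have c: "col A j - col B j \<in> carrier_vec r" using A B by (intro carrier_vecI) auto
  have "col A j - col B j = 0\<^sub>v r"
  proof (rule ccontr)
    assume "col A j - col B j \<noteq> 0\<^sub>v r"
    from lin_depI[OF X c this X0 dist] indpt show False by simp
  qed
  then show "col A j = col B j"
    using A B j by (intro eq_vecI) (simp_all add: vec_eq_iff)
qed (use A B in auto)

lemma rank_eq_trace_if_idempotent:
  fixes P :: "'a :: field mat"
  assumes P: "P \<in> carrier_mat n n" and PP: "P * P = P"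
  shows "of_nat (vec_space.rank n P) = trace P"
proof -
  interpret vec_space "TYPE('a)" n .
  obtain X Y where X: "X \<in> carrier_mat n (rank P)" and Y: "Y \<in> carrier_mat (rank P) n"
    and XY: "X * Y = P" and dist: "distinct (cols X)" and indpt: "lin_indpt (set (cols X))"
    and cols_X: "set (cols X) \<subseteq> set (cols P)"
    using column_basis_factorization[OF P] by blast
  have PX: "P * X = X"
  proof (rule mat_col_eqI)
    fix j assume "j < dim_col X"
    then have j: "j < rank P" using X by simp
    then have "col X j \<in> col P ` {0..<n}"
      using cols_X X P by (auto simp: cols_def)
    then obtain k where k: "k < n" "col X j = col P k" by auto
    have "col (P * X) j = P *\<^sub>v col P k" using P X j k by (simp add: col_mult2[OF P X] del: col_mult)
    also have "\<dots> = col (P * P) k" using P k by (simp add: col_mult2[OF P P] del: col_mult)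
    finally show "col (P * X) j = col X j" using PP k by (simp del: col_mult)
  qed (use P X in auto)
  have "X * (Y * X) = X * 1\<^sub>m (rank P)"
    using X Y by (simp add: assoc_mult_mat[OF X Y X, symmetric] XY PX)
  then have YX: "Y * X = 1\<^sub>m (rank P)"
    by (rule mult_left_cancel_lin_indpt_cols[OF X dist indpt mult_carrier_mat[OF Y X] one_carrier_mat])
  have "of_nat (rank P) = trace (Y * X)" using YX by simp
  also have "\<dots> = trace (X * Y)" by (rule trace_mult_comm[OF Y X])
  finally show ?thesis using XY by simp
qed

section \<open>Unit vectors and rank-one operators\<close>

lemma cscalar_prod_eq_sum: "w \<in> carrier_vec n \<Longrightarrow> v \<bullet>c w = (\<Sum>k<n. v $ k * cnj (w $ k))"
  unfolding scalar_prod_def by (auto simp: conjugate_complex_def atLeast0LessThan)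

lemma cscalar_prod_swap:
  "v \<in> carrier_vec n \<Longrightarrow> w \<in> carrier_vec n \<Longrightarrow> w \<bullet>c v = cnj (v \<bullet>c w)"
  by (simp add: cscalar_prod_eq_sum mult.commute)

lemma cscalar_prod_smult:
  assumes "x \<in> carrier_vec n" "y \<in> carrier_vec n"
  shows "(a \<cdot>\<^sub>v x) \<bullet>c (b \<cdot>\<^sub>v y) = a * cnj b * (x \<bullet>c y)"
  using assms by (simp add: cscalar_prod_eq_sum[of _ n] sum_distrib_left algebra_simps)

lemma cscalar_prod_add_smult:
  assumes u: "u \<in> carrier_vec n" and v: "v \<in> carrier_vec n" and uv: "u \<bullet>c v = 0"
    and t: "cnj t = t"
  shows "(u + t \<cdot>\<^sub>v v) \<bullet>c (u + t \<cdot>\<^sub>v v) = u \<bullet>c u + t * t * (v \<bullet>c v)"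
proof -
  have vu: "v \<bullet>c u = 0" using cscalar_prod_swap[OF u v] uv by simp
  have "(u + t \<cdot>\<^sub>v v) \<bullet>c (u + t \<cdot>\<^sub>v v) = (\<Sum>k<n. u $ k * cnj (u $ k)) + t * (\<Sum>k<n. v $ k * cnj (u $ k))
     + t * (\<Sum>k<n. u $ k * cnj (v $ k)) + t * t * (\<Sum>k<n. v $ k * cnj (v $ k))"
    using u v t by (simp add: cscalar_prod_eq_sum[of _ n] sum.distrib sum_distrib_left algebra_simps)
  then show ?thesis
    using u v uv vu by (simp add: cscalar_prod_eq_sum)
qed

definition normalize_cvec :: "complex vec \<Rightarrow> complex vec" where
  "normalize_cvec w = complex_of_real (1 / sqrt (Re (w \<bullet>c w))) \<cdot>\<^sub>v w"

lemma normalize_cvec_unit: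
  assumes w: "w \<in> carrier_vec n" and w0: "w \<noteq> 0\<^sub>v n"
  shows "normalize_cvec w \<bullet>c normalize_cvec w = 1"
proof -
  have "w \<bullet>c w > 0" using w w0 by simp
  then have re: "Re (w \<bullet>c w) > 0" and ww: "w \<bullet>c w = complex_of_real (Re (w \<bullet>c w))"
    by (auto simp: less_complex_def complex_eq_iff)
  let ?r = "Re (w \<bullet>c w)"
  have "sqrt ?r * sqrt ?r = ?r" using re by simp
  then have "1 / sqrt ?r * (1 / sqrt ?r) * ?r = 1" using re by (simp add: field_simps)
  then have "complex_of_real (1 / sqrt ?r * (1 / sqrt ?r) * ?r) = 1" by simp
  then show ?thesis
    unfolding normalize_cvec_def cscalar_prod_smult[OF w w] complex_cnj_complex_of_real
    by (subst ww) (simp only: of_real_mult)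
qed

lemma normalize_cvec_id: "w \<bullet>c w = 1 \<Longrightarrow> normalize_cvec w = w"
  unfolding normalize_cvec_def by simp

lemma orthonormal_basis_extension:
  fixes u :: "complex vec"
  assumes u: "u \<in> carrier_vec n" and uu: "u \<bullet>c u = 1"
  obtains us where "length us = n" "set us \<subseteq> carrier_vec n" "us ! 0 = u"
    and "\<And>k l. k < n \<Longrightarrow> l < n \<Longrightarrow> us ! k \<bullet>c us ! l = (if k = l then 1 else 0)"
proof -
  have u0: "u \<noteq> 0\<^sub>v n" and n: "0 < n"
    using uu u by (auto simp: cscalar_prod_eq_sum intro!: gr0I)
  interpret cof_vec_space n "TYPE(complex)" .
  note basis = basis_completion[OF u u0]
  define ws where "ws = gram_schmidt n (basis_completion u)"
  note gs = gram_schmidt_result[OF basis(2,4,5) ws_def]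
  have len: "length ws = n" using gs(4) basis(6) by simp
  have ws0: "ws ! 0 = u"
  proof -
    have "basis_completion u = u # tl (basis_completion u)"
      using basis(6,7) n by (cases "basis_completion u") auto
    then have "hd ws = u" unfolding ws_def by (metis gram_schmidt_hd u)
    then show ?thesis using len n by (metis hd_conv_nth length_greater_0_conv)
  qed
  have ws: "ws ! k \<in> carrier_vec n" if "k < n" for k using gs(3) len that by auto
  have orth: "ws ! k \<bullet>c ws ! l = 0 \<longleftrightarrow> k \<noteq> l" if "k < n" "l < n" for k l
    using gs(2) len that unfolding corthogonal_def by auto
  define us where "us = map normalize_cvec ws"
  have us: "us ! k = normalize_cvec (ws ! k)" if "k < n" for k
    unfolding us_def using len that by simp
  show ?thesis
  proof
    show "length us = n" unfolding us_def using len by simp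
    show "set us \<subseteq> carrier_vec n"
      using ws us len by (auto simp: us_def normalize_cvec_def in_set_conv_nth)
    show "us ! 0 = u" using us[OF n] ws0 uu normalize_cvec_id by simp
    fix k l assume k: "k < n" and l: "l < n"
    show "us ! k \<bullet>c us ! l = (if k = l then 1 else 0)"
    proof (cases "k = l")
      case True
      have "ws ! k \<noteq> 0\<^sub>v n" using orth[OF k k] ws[OF k] by auto
      then show ?thesis using True us[OF k] normalize_cvec_unit[OF ws[OF k]] by simp
    next
      case False
      then show ?thesis
        using us[OF k] us[OF l] orth[OF k l]
        by (simp add: normalize_cvec_def cscalar_prod_smult[OF ws[OF k] ws[OF l]])
    qed
  qed
qed

definition outer_prod :: "complex vec \<Rightarrow> complex vec \<Rightarrow> complex mat" where
  "outer_prod u v = mat (dim_vec u) (dim_vec u) (\<lambda>(i, j). u $ i * cnj (v $ j))"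

lemma dim_outer_prod [simp]: "dim_row (outer_prod u v) = dim_vec u" "dim_col (outer_prod u v) = dim_vec u"
  unfolding outer_prod_def by auto

lemma ket_bra_outer_prod: "ket_bra v = outer_prod v v"
  unfolding ket_bra_def outer_prod_def by simp

lemma outer_prod_carrier [simp]: "u \<in> carrier_vec n \<Longrightarrow> outer_prod u v \<in> carrier_mat n n"
  unfolding outer_prod_def by auto

lemma index_outer_prod [simp]:
  "u \<in> carrier_vec n \<Longrightarrow> i < n \<Longrightarrow> j < n \<Longrightarrow> outer_prod u v $$ (i, j) = u $ i * cnj (v $ j)"
  unfolding outer_prod_def by auto

lemma ket_bra_carrier [simp]: "v \<in> carrier_vec n \<Longrightarrow> ket_bra v \<in> carrier_mat n n"
  unfolding ket_bra_outer_prod by simp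

lemma outer_prod_mult:
  assumes "u \<in> carrier_vec n" "v \<in> carrier_vec n" "w \<in> carrier_vec n" "x \<in> carrier_vec n"
  shows "outer_prod u v * outer_prod w x = (w \<bullet>c v) \<cdot>\<^sub>m outer_prod u x"
proof (rule eq_matI)
  fix i j assume "i < dim_row ((w \<bullet>c v) \<cdot>\<^sub>m outer_prod u x)" "j < dim_col ((w \<bullet>c v) \<cdot>\<^sub>m outer_prod u x)"
  then have ij: "i < n" "j < n" using assms by auto
  have "(outer_prod u v * outer_prod w x) $$ (i, j) = (\<Sum>k<n. (w $ k * cnj (v $ k)) * (u $ i * cnj (x $ j)))"
    using assms ij by (simp add: scalar_prod_def atLeast0LessThan algebra_simps)
  also have "\<dots> = ((w \<bullet>c v) \<cdot>\<^sub>m outer_prod u x) $$ (i, j)"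
    using assms ij by (simp add: cscalar_prod_eq_sum sum_distrib_right)
  finally show "(outer_prod u v * outer_prod w x) $$ (i, j) = ((w \<bullet>c v) \<cdot>\<^sub>m outer_prod u x) $$ (i, j)" .
qed (use assms in auto)

lemma mat_adjoint_outer_prod:
  "u \<in> carrier_vec n \<Longrightarrow> v \<in> carrier_vec n \<Longrightarrow> mat_adjoint (outer_prod u v) = outer_prod v u"
  by (rule eq_matI) auto

lemma ket_bra_orth_projector:
  assumes "u \<in> carrier_vec n" "u \<bullet>c u = 1"
  shows "orth_projector n (ket_bra u)"
proof -
  have "outer_prod u u * outer_prod u u = outer_prod u u"
    using assms by (intro eq_matI) (simp_all add: outer_prod_mult)
  with assms show ?thesis
    unfolding orth_projector_def ket_bra_outer_prod by (simp add: mat_adjoint_outer_prod)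
qed

lemma ket_bra_mult_orthogonal:
  assumes "u \<in> carrier_vec n" "v \<in> carrier_vec n" "v \<bullet>c u = 0"
  shows "ket_bra u * ket_bra v = 0\<^sub>m n n"
  using assms unfolding ket_bra_outer_prod by (intro eq_matI) (simp_all add: outer_prod_mult)

lemma ket_bra_smult: "w \<in> carrier_vec n \<Longrightarrow> ket_bra (c \<cdot>\<^sub>v w) = (c * cnj c) \<cdot>\<^sub>m ket_bra w"
  by (rule eq_matI) (auto simp: ket_bra_outer_prod algebra_simps)

lemma ket_bra_zero: "ket_bra (0\<^sub>v n) = 0\<^sub>m n n"
  by (rule eq_matI) (auto simp: ket_bra_def)

lemma ket_bra_add_smult:
  assumes "u \<in> carrier_vec n" "v \<in> carrier_vec n" "cnj t = t"
  shows "ket_bra (u + t \<cdot>\<^sub>v v) = ket_bra u + (t * t) \<cdot>\<^sub>m ket_bra v + t \<cdot>\<^sub>m (outer_prod u v + outer_prod v u)"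
  by (rule eq_matI) (use assms in \<open>auto simp: ket_bra_def outer_prod_def algebra_simps\<close>)

section \<open>Orthogonal projectors and unitaries\<close>

lemma orth_projector_add:
  assumes P: "orth_projector n P" and Q: "orth_projector n Q"
    and PQ: "P * Q = 0\<^sub>m n n" and QP: "Q * P = 0\<^sub>m n n"
  shows "orth_projector n (P + Q)"
proof -
  have Pc: "P \<in> carrier_mat n n" and Qc: "Q \<in> carrier_mat n n"
    using P Q unfolding orth_projector_def by auto
  have "(P + Q) * (P + Q) = P + Q"
  proof (rule eq_matI)
    fix i j assume "i < dim_row (P + Q)" "j < dim_col (P + Q)"
    then have ij: "i < n" "j < n" using Pc Qc by auto
    have "((P + Q) * (P + Q)) $$ (i, j)
      = (P * P) $$ (i, j) + (P * Q) $$ (i, j) + ((Q * P) $$ (i, j) + (Q * Q) $$ (i, j))"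
      using Pc Qc ij by (simp add: index_mult_expand[where n = n] del: index_mult_mat(1))
    then show "((P + Q) * (P + Q)) $$ (i, j) = (P + Q) $$ (i, j)"
      using P Q PQ QP Pc Qc ij unfolding orth_projector_def by simp
  qed (use Pc in auto)
  moreover have "mat_adjoint (P + Q) = mat_adjoint P + mat_adjoint Q"
    using Pc Qc by (intro eq_matI) auto
  ultimately show ?thesis using P Q unfolding orth_projector_def by simp
qed

lemma orth_projector_add_imp_orthogonal:
  assumes P: "orth_projector n P" and Q: "orth_projector n Q" and PQ: "orth_projector n (P + Q)"
  shows "P * Q = 0\<^sub>m n n"
proof -
  have Pc: "P \<in> carrier_mat n n" and Qc: "Q \<in> carrier_mat n n"
    and PP: "P * P = P" and QQ: "Q * Q = Q"
    using P Q unfolding orth_projector_def by auto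
  have anti: "(P * Q) $$ (i, j) + (Q * P) $$ (i, j) = 0" if ij: "i < n" "j < n" for i j
  proof -
    have "((P + Q) * (P + Q)) $$ (i, j) = (P + Q) $$ (i, j)"
      using PQ unfolding orth_projector_def by simp
    moreover have "((P + Q) * (P + Q)) $$ (i, j)
      = (P * P) $$ (i, j) + (Q * Q) $$ (i, j) + ((P * Q) $$ (i, j) + (Q * P) $$ (i, j))"
      using Pc Qc ij by (simp add: index_mult_expand[where n = n] algebra_simps del: index_mult_mat(1))
    ultimately show ?thesis unfolding PP QQ using Pc Qc ij by simp
  qed
  define N M where "N = P * Q" and "M = Q * P"
  have N: "N \<in> carrier_mat n n" and M: "M \<in> carrier_mat n n"
    unfolding N_def M_def using Pc Qc by auto
  have NM: "N + M = 0\<^sub>m n n"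
    by (rule eq_matI) (use anti Pc Qc in \<open>auto simp: N_def M_def simp del: index_mult_mat(1)\<close>)
  have PN: "P * N = N" and MP: "M * P = M" and NP: "N * P = P * M"
    unfolding N_def M_def using Pc Qc PP by (metis assoc_mult_mat)+
  have "N $$ (i, j) = 0" if ij: "i < n" "j < n" for i j
  proof -
    \<comment> \<open>multiplying \<open>N + M = 0\<close> by \<open>P\<close> on either side gives \<open>N = - P M = M\<close>\<close>
    have "N $$ (i, j) + (P * M) $$ (i, j) = 0"
      using arg_cong[OF NM, of "\<lambda>X. (P * X) $$ (i, j)"] index_mult_add_right[OF N M Pc ij] PN Pc ij
      by simp
    moreover have "(P * M) $$ (i, j) + M $$ (i, j) = 0"
      using arg_cong[OF NM, of "\<lambda>X. (X * P) $$ (i, j)"] index_mult_add_left[OF N M Pc ij] NP MP Pc ij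
      by simp
    moreover have "N $$ (i, j) + M $$ (i, j) = 0"
      using arg_cong[OF NM, of "\<lambda>X. X $$ (i, j)"] N M ij by simp
    ultimately have "2 * N $$ (i, j) = 0"
      by (metis add_diff_cancel_right' mult_2)
    then show ?thesis by simp
  qed
  then show ?thesis using N unfolding N_def by (intro eq_matI) (auto simp del: index_mult_mat(1))
qed

lemma one_plus_smult_idempotent_mult:
  fixes P :: "'a :: comm_ring_1 mat"
  assumes P: "P \<in> carrier_mat n n" and PP: "P * P = P"
  shows "(1\<^sub>m n + a \<cdot>\<^sub>m P) * (1\<^sub>m n + b \<cdot>\<^sub>m P) = 1\<^sub>m n + (a + b + a * b) \<cdot>\<^sub>m P"
proof (rule eq_matI)
  fix i j assume "i < dim_row (1\<^sub>m n + (a + b + a * b) \<cdot>\<^sub>m P)" "j < dim_col (1\<^sub>m n + (a + b + a * b) \<cdot>\<^sub>m P)"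
  then have ij: "i < n" "j < n" using P by auto
  have "((1\<^sub>m n + a \<cdot>\<^sub>m P) * (1\<^sub>m n + b \<cdot>\<^sub>m P)) $$ (i, j)
    = 1\<^sub>m n $$ (i, j) + (a + b) * P $$ (i, j) + a * b * (P * P) $$ (i, j)"
    using P ij by (simp add: index_mult_expand[where n = n] algebra_simps del: index_mult_mat(1))
  then show "((1\<^sub>m n + a \<cdot>\<^sub>m P) * (1\<^sub>m n + b \<cdot>\<^sub>m P)) $$ (i, j) = (1\<^sub>m n + (a + b + a * b) \<cdot>\<^sub>m P) $$ (i, j)"
    using P ij by (simp add: PP algebra_simps)
qed (use P in auto)

text \<open>The condition \<open>c + cnj c + c * cnj c = 0\<close> says \<open>\<bar>1 + c\<bar> = 1\<close>.\<close>

lemma unitary_one_plus_smult_projector: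
  assumes P: "orth_projector n P" and c: "c + cnj c + c * cnj c = 0"
  shows "unitary_mat n (1\<^sub>m n + c \<cdot>\<^sub>m P)"
proof -
  have Pc: "P \<in> carrier_mat n n" and "mat_adjoint P = P" and PP: "P * P = P"
    using P unfolding orth_projector_def by auto
  then have "mat_adjoint (1\<^sub>m n + c \<cdot>\<^sub>m P) = 1\<^sub>m n + cnj c \<cdot>\<^sub>m P"
    by (simp add: mat_adjoint_one_plus_smult)
  moreover have "c + cnj c + c * cnj c = cnj c + c + cnj c * c" by (simp add: algebra_simps)
  moreover have "1\<^sub>m n + 0 \<cdot>\<^sub>m P = 1\<^sub>m n" using Pc by (intro eq_matI) auto
  ultimately show ?thesis
    unfolding unitary_mat_def using Pc c by (simp add: one_plus_smult_idempotent_mult[OF Pc PP])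
qed

lemma unitary_one_plus_smult_entry:
  assumes Q: "Q \<in> carrier_mat n n" and U: "unitary_mat n (1\<^sub>m n + c \<cdot>\<^sub>m Q)" and ij: "i < n" "j < n"
  shows "c * Q $$ (i, j) + cnj c * cnj (Q $$ (j, i)) + c * cnj c * (Q * mat_adjoint Q) $$ (i, j) = 0"
proof -
  have "(1\<^sub>m n + c \<cdot>\<^sub>m Q) * (1\<^sub>m n + cnj c \<cdot>\<^sub>m mat_adjoint Q) = 1\<^sub>m n"
    using U unfolding unitary_mat_def mat_adjoint_one_plus_smult[OF Q] by simp
  then have "((1\<^sub>m n + c \<cdot>\<^sub>m Q) * (1\<^sub>m n + cnj c \<cdot>\<^sub>m mat_adjoint Q)) $$ (i, j) = 1\<^sub>m n $$ (i, j)"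
    by simp
  moreover have "((1\<^sub>m n + c \<cdot>\<^sub>m Q) * (1\<^sub>m n + cnj c \<cdot>\<^sub>m mat_adjoint Q)) $$ (i, j) = 1\<^sub>m n $$ (i, j)
    + (c * Q $$ (i, j) + cnj c * cnj (Q $$ (j, i)) + c * cnj c * (Q * mat_adjoint Q) $$ (i, j))"
    using Q ij by (simp add: index_mult_expand[where n = n] algebra_simps del: index_mult_mat(1))
  ultimately show ?thesis by simp
qed

lemma orth_projector_if_unitary_one_plus_smult:
  assumes Q: "Q \<in> carrier_mat n n"
    and U: "\<And>c. c + cnj c + c * cnj c = 0 \<Longrightarrow> unitary_mat n (1\<^sub>m n + c \<cdot>\<^sub>m Q)"
  shows "orth_projector n Q"
proof -
  have herm: "cnj (Q $$ (j, i)) = Q $$ (i, j)" and square: "(Q * mat_adjoint Q) $$ (i, j) = Q $$ (i, j)"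
    if ij: "i < n" "j < n" for i j
  proof -
    let ?q = "Q $$ (i, j)" and ?q' = "cnj (Q $$ (j, i))" and ?m = "(Q * mat_adjoint Q) $$ (i, j)"
    have "2 * (2 * ?m) = 2 * (?q + ?q')"
      using unitary_one_plus_smult_entry[OF Q U ij, of "-2"] by (simp add: algebra_simps)
    then have m: "2 * ?m = ?q + ?q'" by (metis mult_left_cancel zero_neq_numeral)
    have "(\<i> - 1) * ?q - (\<i> + 1) * ?q' + 2 * ?m = 0"
      using unitary_one_plus_smult_entry[OF Q U ij, of "\<i> - 1"]
      by (simp add: complex_eq_iff algebra_simps)
    then have "\<i> * (?q - ?q') = 0" unfolding m by (simp add: algebra_simps)
    then show "?q' = ?q" by simp
    with m show "?m = ?q" by simp
  qed
  have "mat_adjoint Q = Q" by (rule eq_matI) (use Q herm in auto)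
  moreover from this have "Q * Q = Q"
    by (metis Q square carrier_matD eq_matI index_mult_mat(2,3))
  ultimately show ?thesis unfolding orth_projector_def using Q by simp
qed

section \<open>Resolution of the identity\<close>

primrec mat_sum :: "nat \<Rightarrow> (nat \<Rightarrow> 'a :: comm_ring_1 mat) \<Rightarrow> nat \<Rightarrow> 'a mat" where
  "mat_sum n F 0 = 0\<^sub>m n n"
| "mat_sum n F (Suc m) = mat_sum n F m + F m"

lemma mat_sum_carrier: "(\<And>k. k < m \<Longrightarrow> F k \<in> carrier_mat n n) \<Longrightarrow> mat_sum n F m \<in> carrier_mat n n"
  by (induction m) auto

lemma index_mat_sum:
  assumes "\<And>k. k < m \<Longrightarrow> F k \<in> carrier_mat n n" "i < n" "j < n"
  shows "mat_sum n F m $$ (i, j) = (\<Sum>k<m. F k $$ (i, j))"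
  using assms(1)
proof (induction m)
  case (Suc m)
  then have "dim_row (F m) = n" "dim_col (F m) = n" by auto
  with Suc assms(2,3) show ?case by simp
qed (simp add: assms(2,3))

lemma trace_mat_sum:
  assumes "\<And>k. k < m \<Longrightarrow> F k \<in> carrier_mat n n"
  shows "trace (mat_sum n F m) = (\<Sum>k<m. trace (F k))"
  using assms
proof (induction m)
  case (Suc m)
  then show ?case by (simp add: trace_add[OF mat_sum_carrier, of m F n] Suc.prems)
qed simp

lemma sum_ket_bra_orthonormal_basis:
  assumes len: "length us = n" and us: "set us \<subseteq> carrier_vec n"
    and orth: "\<And>k l. k < n \<Longrightarrow> l < n \<Longrightarrow> us ! k \<bullet>c us ! l = (if k = l then 1 else 0)"
  shows "mat_sum n (\<lambda>k. ket_bra (us ! k)) n = 1\<^sub>m n"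
proof -
  define U where "U = mat_of_cols n us"
  have Uc: "U \<in> carrier_mat n n" unfolding U_def using len by auto
  have U_index: "U $$ (i, k) = us ! k $ i" if "i < n" "k < n" for i k
    unfolding U_def using len that by (simp add: mat_of_cols_def)
  have usk: "us ! k \<in> carrier_vec n" if "k < n" for k using us len that by auto
  have "mat_adjoint U * U = 1\<^sub>m n"
  proof (rule eq_matI)
    fix k l assume "k < dim_row (1\<^sub>m n)" "l < dim_col (1\<^sub>m n)"
    then have kl: "k < n" "l < n" by auto
    have "(mat_adjoint U * U) $$ (k, l) = (\<Sum>i<n. cnj (U $$ (i, k)) * U $$ (i, l))"
      using Uc kl by (simp add: scalar_prod_def atLeast0LessThan)
    also have "\<dots> = (\<Sum>i<n. us ! l $ i * cnj (us ! k $ i))"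
      using kl U_index by (intro sum.cong) (simp_all add: mult.commute)
    also have "\<dots> = 1\<^sub>m n $$ (k, l)"
      using orth[OF kl(2,1)] kl by (simp add: cscalar_prod_eq_sum[OF usk[OF kl(1)]])
    finally show "(mat_adjoint U * U) $$ (k, l) = 1\<^sub>m n $$ (k, l)" .
  qed (use Uc in auto)
  then have UU: "U * mat_adjoint U = 1\<^sub>m n"
    by (rule mat_mult_left_right_inverse[OF mat_adjoint_carrier[OF Uc] Uc])
  have kb: "ket_bra (us ! k) \<in> carrier_mat n n" if "k < n" for k using usk that by simp
  show ?thesis
  proof (rule eq_matI)
    fix i j assume "i < dim_row (1\<^sub>m n)" "j < dim_col (1\<^sub>m n)"
    then have ij: "i < n" "j < n" by auto
    have "mat_sum n (\<lambda>k. ket_bra (us ! k)) n $$ (i, j) = (\<Sum>k<n. ket_bra (us ! k) $$ (i, j))"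
      by (rule index_mat_sum[OF kb ij])
    also have "\<dots> = (\<Sum>k<n. U $$ (i, k) * cnj (U $$ (j, k)))"
      using ij U_index index_outer_prod[OF usk ij] by (simp add: ket_bra_outer_prod)
    also have "\<dots> = (U * mat_adjoint U) $$ (i, j)"
      using Uc ij by (simp add: scalar_prod_def atLeast0LessThan)
    finally show "mat_sum n (\<lambda>k. ket_bra (us ! k)) n $$ (i, j) = 1\<^sub>m n $$ (i, j)"
      using UU by simp
  qed (use mat_sum_carrier[of n "\<lambda>k. ket_bra (us ! k)" n] kb in auto)
qed

section \<open>Unital unitarity-preserving maps\<close>

lemma cubic_coeffs_eq_0:
  fixes e a b :: "'a :: field_char_0"
  assumes "\<And>t. t \<in> {1, -1, 2} \<Longrightarrow> t * t * e + t * a + t * t * t * b = 0"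
  shows "e = 0" and "a = 0"
proof -
  have h1: "e + a + b = 0" and h2: "e - a - b = 0" and h3: "4 * e + 2 * a + 8 * b = 0"
    using assms[of 1] assms[of "-1"] assms[of 2] by (simp_all add: algebra_simps)
  have "2 * e = (e + a + b) + (e - a - b)" by simp
  then show e: "e = 0" unfolding h1 h2 by simp
  have a: "a = - b" using h1 e by (simp add: eq_neg_iff_add_eq_0)
  have "6 * b = 0" using h3 unfolding a e by (simp add: algebra_simps)
  then have "b = 0" by simp
  then show "a = 0" using h1 e by simp
qed

locale unital_unitarity_preserving =
  fixes d1 d2 :: nat and f :: "complex mat \<Rightarrow> complex mat"
  assumes linear: "linear_map_mat d1 d2 f"
    and unitarity: "unitarity_preserving d1 d2 f"
    and map_one: "f (1\<^sub>m d1) = 1\<^sub>m d2"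
begin

lemma map_carrier: "A \<in> carrier_mat d1 d1 \<Longrightarrow> f A \<in> carrier_mat d2 d2"
  and map_add: "A \<in> carrier_mat d1 d1 \<Longrightarrow> B \<in> carrier_mat d1 d1 \<Longrightarrow> f (A + B) = f A + f B"
  and map_smult: "A \<in> carrier_mat d1 d1 \<Longrightarrow> f (c \<cdot>\<^sub>m A) = c \<cdot>\<^sub>m f A"
  using linear unfolding linear_map_mat_def by auto

lemma map_zero: "f (0\<^sub>m d1 d1) = 0\<^sub>m d2 d2"
proof -
  have "f (0\<^sub>m d1 d1) = f (0 \<cdot>\<^sub>m 0\<^sub>m d1 d1)" by simp
  also have "\<dots> = 0 \<cdot>\<^sub>m f (0\<^sub>m d1 d1)" by (rule map_smult) simp
  also have "\<dots> = 0\<^sub>m d2 d2" using map_carrier[of "0\<^sub>m d1 d1"] by (intro eq_matI) auto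
  finally show ?thesis .
qed

lemma map_mat_sum:
  "(\<And>k. k < m \<Longrightarrow> F k \<in> carrier_mat d1 d1) \<Longrightarrow> f (mat_sum d1 F m) = mat_sum d2 (\<lambda>k. f (F k)) m"
  by (induction m) (simp_all add: map_zero map_add mat_sum_carrier)

lemma map_orth_projector:
  assumes P: "orth_projector d1 P"
  shows "orth_projector d2 (f P)"
proof (rule orth_projector_if_unitary_one_plus_smult)
  have Pc: "P \<in> carrier_mat d1 d1" using P unfolding orth_projector_def by simp
  then show "f P \<in> carrier_mat d2 d2" by (rule map_carrier)
  fix c :: complex assume "c + cnj c + c * cnj c = 0"
  then have "unitary_mat d2 (f (1\<^sub>m d1 + c \<cdot>\<^sub>m P))"
    using unitarity unitary_one_plus_smult_projector[OF P] unfolding unitarity_preserving_def by blast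
  moreover have "f (1\<^sub>m d1 + c \<cdot>\<^sub>m P) = 1\<^sub>m d2 + c \<cdot>\<^sub>m f P"
    using Pc by (simp add: map_add map_smult map_one)
  ultimately show "unitary_mat d2 (1\<^sub>m d2 + c \<cdot>\<^sub>m f P)" by simp
qed

lemma map_ket_bra_square:
  assumes w: "w \<in> carrier_vec d1"
  shows "f (ket_bra w) * f (ket_bra w) = (w \<bullet>c w) \<cdot>\<^sub>m f (ket_bra w)"
proof (cases "w = 0\<^sub>v d1")
  case True
  then show ?thesis by (simp add: ket_bra_zero map_zero)
next
  case False
  let ?F = "f (ket_bra w)" and ?y = "normalize_cvec w"
  obtain c where y: "?y = c \<cdot>\<^sub>v w" unfolding normalize_cvec_def by blast
  have cw: "c * cnj c * (w \<bullet>c w) = 1"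
    using normalize_cvec_unit[OF w False] unfolding y cscalar_prod_smult[OF w w] .
  then have c: "c * cnj c \<noteq> 0" by auto
  with cw have ww: "w \<bullet>c w = 1 / (c * cnj c)" by (simp add: field_simps)
  have F: "?F \<in> carrier_mat d2 d2" using w by (simp add: map_carrier)
  have "f (ket_bra ?y) = (c * cnj c) \<cdot>\<^sub>m ?F"
    unfolding y ket_bra_smult[OF w] using w by (simp add: map_smult)
  moreover have "orth_projector d2 (f (ket_bra ?y))"
    using map_orth_projector[OF ket_bra_orth_projector] w normalize_cvec_unit[OF w False] y by simp
  ultimately have sq: "((c * cnj c) \<cdot>\<^sub>m ?F) * ((c * cnj c) \<cdot>\<^sub>m ?F) = (c * cnj c) \<cdot>\<^sub>m ?F"
    unfolding orth_projector_def by simp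
  show ?thesis
  proof (rule eq_matI)
    fix i j assume "i < dim_row ((w \<bullet>c w) \<cdot>\<^sub>m ?F)" "j < dim_col ((w \<bullet>c w) \<cdot>\<^sub>m ?F)"
    then have ij: "i < d2" "j < d2" using F by auto
    have "c * cnj c * (c * cnj c * (?F * ?F) $$ (i, j)) = c * cnj c * ?F $$ (i, j)"
      using arg_cong[OF sq, of "\<lambda>X. X $$ (i, j)"] F ij
      by (simp add: index_mult_expand[where n = d2] del: index_mult_mat(1))
    then have "(?F * ?F) $$ (i, j) = ?F $$ (i, j) / (c * cnj c)"
      using c by (simp add: field_simps del: index_mult_mat(1))
    then show "(?F * ?F) $$ (i, j) = ((w \<bullet>c w) \<cdot>\<^sub>m ?F) $$ (i, j)"
      using ww ij F by (simp del: index_mult_mat(1))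
  qed (use F in auto)
qed

lemma map_ket_bra_mult_orthogonal:
  assumes u: "u \<in> carrier_vec d1" and v: "v \<in> carrier_vec d1"
    and uu: "u \<bullet>c u = 1" and vv: "v \<bullet>c v = 1" and uv: "u \<bullet>c v = 0"
  shows "f (ket_bra u) * f (ket_bra v) = 0\<^sub>m d2 d2"
proof -
  have vu: "v \<bullet>c u = 0" using cscalar_prod_swap[OF u v] uv by simp
  have "orth_projector d1 (ket_bra u + ket_bra v)"
    by (intro orth_projector_add ket_bra_orth_projector ket_bra_mult_orthogonal u v uu vv uv vu)
  then have "orth_projector d2 (f (ket_bra u + ket_bra v))" by (rule map_orth_projector)
  then have "orth_projector d2 (f (ket_bra u) + f (ket_bra v))"
    using u v by (simp add: map_add)
  then show ?thesis
    by (intro orth_projector_add_imp_orthogonal map_orth_projector ket_bra_orth_projector u v uu vv)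
qed

lemma map_ket_bra_add_smult:
  assumes u: "u \<in> carrier_vec d1" and v: "v \<in> carrier_vec d1" and t: "cnj t = t"
  shows "f (ket_bra (u + t \<cdot>\<^sub>v v))
    = f (ket_bra u) + (t * t) \<cdot>\<^sub>m f (ket_bra v) + t \<cdot>\<^sub>m f (outer_prod u v + outer_prod v u)"
  using u v by (simp add: ket_bra_add_smult[OF u v t] map_add map_smult)

lemma map_ket_bra_exchange:
  assumes u: "u \<in> carrier_vec d1" and v: "v \<in> carrier_vec d1"
    and uu: "u \<bullet>c u = 1" and vv: "v \<bullet>c v = 1" and uv: "u \<bullet>c v = 0"
  defines "A \<equiv> f (ket_bra u)" and "B \<equiv> f (ket_bra v)" and "S \<equiv> f (outer_prod u v + outer_prod v u)"
  shows "S * S = A + B" and "A * S + S * A = S"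
proof -
  have vu: "v \<bullet>c u = 0" using cscalar_prod_swap[OF u v] uv by simp
  have A: "A \<in> carrier_mat d2 d2" and B: "B \<in> carrier_mat d2 d2" and S: "S \<in> carrier_mat d2 d2"
    unfolding A_def B_def S_def using u v by (simp_all add: map_carrier)
  have AA: "A * A = A" and BB: "B * B = B"
    unfolding A_def B_def using map_orth_projector[OF ket_bra_orth_projector] u v uu vv
    unfolding orth_projector_def by auto
  have AB: "A * B = 0\<^sub>m d2 d2" and BA: "B * A = 0\<^sub>m d2 d2"
    unfolding A_def B_def using map_ket_bra_mult_orthogonal u v uu vv uv vu by auto
  \<comment> \<open>the image of the projector onto \<open>u + t v\<close> gives a polynomial identity in \<open>t\<close>\<close>
  have poly: "t * t * ((S * S) $$ (i, j) - (A $$ (i, j) + B $$ (i, j)))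
      + t * (((A * S) $$ (i, j) + (S * A) $$ (i, j)) - S $$ (i, j))
      + t * t * t * ((B * S) $$ (i, j) + (S * B) $$ (i, j) - S $$ (i, j)) = 0"
    if t: "cnj t = t" and ij: "i < d2" "j < d2" for t i j
  proof -
    let ?G = "A + (t * t) \<cdot>\<^sub>m B + t \<cdot>\<^sub>m S"
    have "(u + t \<cdot>\<^sub>v v) \<bullet>c (u + t \<cdot>\<^sub>v v) = 1 + t * t"
      using cscalar_prod_add_smult[OF u v uv t] uu vv by simp
    then have "?G * ?G = (1 + t * t) \<cdot>\<^sub>m ?G"
      using map_ket_bra_square[of "u + t \<cdot>\<^sub>v v"] map_ket_bra_add_smult[OF u v t] u v
      unfolding A_def B_def S_def by simp
    then have "(?G * ?G) $$ (i, j) = ((1 + t * t) \<cdot>\<^sub>m ?G) $$ (i, j)" by simp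
    then show ?thesis
      using A B S ij
      by (simp add: index_mult_expand[where n = d2] AA BB AB BA algebra_simps del: index_mult_mat(1))
  qed
  have "(S * S) $$ (i, j) = A $$ (i, j) + B $$ (i, j)
      \<and> (A * S) $$ (i, j) + (S * A) $$ (i, j) = S $$ (i, j)" if ij: "i < d2" "j < d2" for i j
  proof -
    have "cnj t = t" if "t \<in> {1, -1, 2}" for t :: complex using that by auto
    from cubic_coeffs_eq_0[OF poly[OF this ij]] show ?thesis by (simp only: right_minus_eq)
  qed
  then show "S * S = A + B" and "A * S + S * A = S"
    using A B S by (auto intro!: eq_matI simp del: index_mult_mat(1))
qed

lemma trace_map_ket_bra_orthogonal:
  assumes u: "u \<in> carrier_vec d1" and v: "v \<in> carrier_vec d1"
    and uu: "u \<bullet>c u = 1" and vv: "v \<bullet>c v = 1" and uv: "u \<bullet>c v = 0"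
  shows "trace (f (ket_bra u)) = trace (f (ket_bra v))"
proof (rule trace_eq_if_exchanged)
  have vu: "v \<bullet>c u = 0" using cscalar_prod_swap[OF u v] uv by simp
  show "f (ket_bra u) \<in> carrier_mat d2 d2" "f (ket_bra v) \<in> carrier_mat d2 d2"
    "f (outer_prod u v + outer_prod v u) \<in> carrier_mat d2 d2"
    using u v by (simp_all add: map_carrier)
  show "f (ket_bra u) * f (ket_bra u) = f (ket_bra u)"
    using map_orth_projector[OF ket_bra_orth_projector[OF u uu]] unfolding orth_projector_def by simp
  show "f (ket_bra u) * f (ket_bra v) = 0\<^sub>m d2 d2" "f (ket_bra v) * f (ket_bra u) = 0\<^sub>m d2 d2"
    using map_ket_bra_mult_orthogonal u v uu vv uv vu by auto
qed (use map_ket_bra_exchange[OF u v uu vv uv] in auto)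

lemma dim_eq_mult_rank_map_ket_bra:
  assumes u: "u \<in> carrier_vec d1" and uu: "u \<bullet>c u = 1"
  shows "d2 = d1 * vec_space.rank d2 (f (ket_bra u))"
proof -
  obtain us where len: "length us = d1" and us: "set us \<subseteq> carrier_vec d1" and us0: "us ! 0 = u"
    and orth: "\<And>k l. k < d1 \<Longrightarrow> l < d1 \<Longrightarrow> us ! k \<bullet>c us ! l = (if k = l then 1 else 0)"
    using orthonormal_basis_extension[OF u uu] by blast
  have usk: "us ! k \<in> carrier_vec d1" if "k < d1" for k using us len that by auto
  have trace_eq: "trace (f (ket_bra (us ! k))) = trace (f (ket_bra u))" if k: "k < d1" for k
  proof (cases "k = 0")
    case False
    then have "u \<bullet>c us ! k = 0" using orth[OF _ k, of 0] us0 k by simp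
    then show ?thesis using trace_map_ket_bra_orthogonal[OF u usk[OF k] uu] orth[OF k k] by simp
  qed (simp add: us0)
  have "of_nat d2 = trace (f (mat_sum d1 (\<lambda>k. ket_bra (us ! k)) d1))"
    using sum_ket_bra_orthonormal_basis[OF len us orth] map_one by simp
  also have "\<dots> = (\<Sum>k<d1. trace (f (ket_bra (us ! k))))"
    using usk by (simp add: map_mat_sum trace_mat_sum map_carrier)
  also have "\<dots> = of_nat d1 * trace (f (ket_bra u))"
    using trace_eq by simp
  also have "trace (f (ket_bra u)) = of_nat (vec_space.rank d2 (f (ket_bra u)))"
    using map_orth_projector[OF ket_bra_orth_projector[OF u uu]]
    unfolding orth_projector_def by (simp add: rank_eq_trace_if_idempotent)
  finally have "(of_nat d2 :: complex) = of_nat (d1 * vec_space.rank d2 (f (ket_bra u)))" by simp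
  then show ?thesis by (simp only: of_nat_eq_iff)
qed

end

theorem lemma1:
  fixes d1 d2 :: nat and f :: "complex mat \<Rightarrow> complex mat"
  assumes "d1 > 0"
    and "linear_map_mat d1 d2 f"
    and "unitarity_preserving d1 d2 f"
    and "f (1\<^sub>m d1) = 1\<^sub>m d2"
  shows "d1 dvd d2 \<and>
    (\<forall>\<psi> \<phi>. \<psi> \<in> carrier_vec d1 \<longrightarrow> \<phi> \<in> carrier_vec d1 \<longrightarrow>
       \<psi> \<bullet>c \<psi> = 1 \<longrightarrow> \<phi> \<bullet>c \<phi> = 1 \<longrightarrow> \<psi> \<bullet>c \<phi> = 0 \<longrightarrow>
       orth_projector d2 (f (ket_bra \<psi>)) \<and> orth_projector d2 (f (ket_bra \<phi>)) \<and>
       f (ket_bra \<psi>) * f (ket_bra \<phi>) = 0\<^sub>m d2 d2 \<and>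
       vec_space.rank d2 (f (ket_bra \<psi>)) = d2 div d1 \<and>
       vec_space.rank d2 (f (ket_bra \<phi>)) = d2 div d1)"
proof -
  interpret unital_unitarity_preserving d1 d2 f
    using assms(2-4) by unfold_locales
  have rank: "vec_space.rank d2 (f (ket_bra \<psi>)) = d2 div d1"
    if "\<psi> \<in> carrier_vec d1" "\<psi> \<bullet>c \<psi> = 1" for \<psi>
    using dim_eq_mult_rank_map_ket_bra[OF that] \<open>d1 > 0\<close> by (metis nonzero_mult_div_cancel_left neq0_conv)
  have "unit_vec d1 0 \<bullet>c unit_vec d1 0 = (1 :: complex)"
    using \<open>d1 > 0\<close> by simp
  then have "d1 dvd d2"
    using dim_eq_mult_rank_map_ket_bra[of "unit_vec d1 0"] by (metis dvd_triv_left unit_vec_carrier)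
  then show ?thesis
    using rank map_orth_projector ket_bra_orth_projector map_ket_bra_mult_orthogonal by blast
qed

end
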